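(* Let $n\geq 2$, $m_*<m<1$, $c>0$, let $\omega\in\mathbb{R}^n$ be a unit vector and $a:=c\omega$. Define \[ \varphi(y):=A\,(|a||y|+a\cdot y)^{-\frac{1}{1-m}},\qquad A:=\left(\frac{(n-1)m}{1-m}\left(m-\frac{n-3}{n-1}\right)\right)^{\frac{1}{1-m}}, \] for $y\in\mathbb{R}^n\setminus\{-\lambda\omega;\lambda\geq 0\}$. Then on this set \[ \Delta\varphi^m=-a\cdot\nabla\varphi=\frac{A}{1-m}\frac{|a|}{|y|}(|a||y|+a\cdot y)^{-\frac{1}{1-m}}\geq 0, \] so $\varphi$ is a stationary solution of $v_t=\Delta v^m+a\cdot\nabla v$; consequently $u(x,t):=\varphi(x-ta)$ solves $u_t=\Delta u^m$ for $x\notin\{s\omega;-\infty<s\leq ct\}$, and is singular on that set. Moreover, for every $0<\gamma<1$, $(1+\gamma)\varphi(x-ta)$ is a super-solution and $(1-\gamma)\varphi(x-ta)$ is a sub-solution of $u_t=\Delta u^m$ on the same set.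
   Context: $m_*:=0$ if $n=2$ and $m_*:=\frac{n-3}{n-1}$ if $n\geq 3$. Super-/sub-solution means $u_t\geq\Delta u^m$ (resp. $\leq$) pointwise. *)

theory Defs
  imports "HOL-Analysis.Analysis"
begin

definition mstar :: "nat \<Rightarrow> real" where
  "mstar n = (if n = 2 then 0 else (real n - 3) / (real n - 1))"

definition Aconst :: "nat \<Rightarrow> real \<Rightarrow> real" where
  "Aconst n m = ((real n - 1) * m / (1 - m) * (m - (real n - 3) / (real n - 1))) powr (1 / (1 - m))"

definition phi :: "nat \<Rightarrow> real \<Rightarrow> 'a::euclidean_space \<Rightarrow> 'a \<Rightarrow> real" where
  "phi n m a y = Aconst n m * (norm a * norm y + inner a y) powr (- 1 / (1 - m))"

definition has_laplacian :: "('a::euclidean_space \<Rightarrow> real) \<Rightarrow> 'a \<Rightarrow> real \<Rightarrow> bool" where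
  "has_laplacian f y L \<longleftrightarrow>
     (\<exists>d::'a \<Rightarrow> real.
        (\<forall>i\<in>Basis. \<exists>g::real \<Rightarrow> real.
            (\<forall>\<^sub>F s in nhds 0. ((\<lambda>t. f (y + t *\<^sub>R i)) has_real_derivative g s) (at s))
          \<and> (g has_real_derivative d i) (at 0))
      \<and> L = (\<Sum>i\<in>Basis. d i))"

definition pm_solution_at :: "('a::euclidean_space \<Rightarrow> real \<Rightarrow> real) \<Rightarrow> real \<Rightarrow> 'a \<Rightarrow> real \<Rightarrow> bool" where
  "pm_solution_at u m x t \<longleftrightarrow> (\<exists>ut L. ((\<lambda>s. u x s) has_real_derivative ut) (at t)
       \<and> has_laplacian (\<lambda>z. (u z t) powr m) x L \<and> ut = L)"

definition pm_supersolution_at :: "('a::euclidean_space \<Rightarrow> real \<Rightarrow> real) \<Rightarrow> real \<Rightarrow> 'a \<Rightarrow> real \<Rightarrow> bool" where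
  "pm_supersolution_at u m x t \<longleftrightarrow> (\<exists>ut L. ((\<lambda>s. u x s) has_real_derivative ut) (at t)
       \<and> has_laplacian (\<lambda>z. (u z t) powr m) x L \<and> ut \<ge> L)"

definition pm_subsolution_at :: "('a::euclidean_space \<Rightarrow> real \<Rightarrow> real) \<Rightarrow> real \<Rightarrow> 'a \<Rightarrow> real \<Rightarrow> bool" where
  "pm_subsolution_at u m x t \<longleftrightarrow> (\<exists>ut L. ((\<lambda>s. u x s) has_real_derivative ut) (at t)
       \<and> has_laplacian (\<lambda>z. (u z t) powr m) x L \<and> ut \<le> L)"

end

theory Submission
  imports Defs "HOL-Real_Asymp.Real_Asymp"
begin

text \<open>Write \<open>\<phi> = A W\<^sup>p\<close> with \<open>p = -1/(1-m)\<close> and \<open>W(y) = |a||y| + a\<cdot>y\<close>, which is \<open>\<ge> 0\<close> and vanishes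
  exactly on the ray \<open>{-l a; l \<ge> 0}\<close>. Away from that ray \<open>\<nabla>W = |a| y/|y| + a\<close>, so
  \<open>a\<cdot>\<nabla>W = |a|\<^sup>2 + |a| a\<cdot>y/|y| = |a| W/|y|\<close>, \<open>|\<nabla>W|\<^sup>2 = 2|a| W/|y|\<close> and \<open>\<Delta>W = (n-1)|a|/|y|\<close>.
  Hence both \<open>-a\<cdot>\<nabla>\<phi>\<close> and \<open>\<Delta>\<phi>\<^sup>m = A\<^sup>m \<Delta>W\<^sup>p\<^sup>m\<close> are multiples of \<open>|a| W\<^sup>p/|y|\<close>, and the
  constant \<open>A\<close> is chosen to make the two multiples equal; it is real and positive precisely
  because \<open>m > m\<^sub>*\<close>. The travelling wave \<open>\<phi>(x - t a)\<close> therefore has \<open>u\<^sub>t = -a\<cdot>\<nabla>\<phi> = \<Delta>\<phi>\<^sup>m \<ge> 0\<close>,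
  and since \<open>k\<^sup>m \<le> k\<close> for \<open>k \<ge> 1\<close> (and \<open>k\<^sup>m \<ge> k\<close> for \<open>k \<le> 1\<close>), multiplying by \<open>1 \<plusminus> \<gamma>\<close>
  gives super- and sub-solutions. Blow-up on the ray is the limit \<open>W\<^sup>p \<rightarrow> \<infinity>\<close> as \<open>W \<rightarrow> 0\<^sup>+\<close>.\<close>

definition ray_gauge :: "'a::real_inner \<Rightarrow> 'a \<Rightarrow> real" where
  "ray_gauge a y = norm a * norm y + inner a y"

lemma phi_eq_ray_gauge: "phi n m a y = Aconst n m * ray_gauge a y powr (- 1 / (1 - m))"
  by (simp add: phi_def ray_gauge_def)

lemma ray_gauge_nonneg: "0 \<le> ray_gauge a y"
  using Cauchy_Schwarz_ineq2[of a y] by (simp add: ray_gauge_def)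

lemma ray_gauge_scaleR: "0 \<le> c \<Longrightarrow> ray_gauge (c *\<^sub>R a) y = c * ray_gauge a y"
  by (simp add: ray_gauge_def algebra_simps)

lemma ray_gauge_pos_iff:
  fixes a y :: "'a::real_inner"
  assumes "a \<noteq> 0"
  shows "0 < ray_gauge a y \<longleftrightarrow> (\<forall>l\<ge>0. y \<noteq> - (l *\<^sub>R a))"
proof
  assume pos: "0 < ray_gauge a y"
  show "\<forall>l\<ge>0. y \<noteq> - (l *\<^sub>R a)"
  proof (intro allI impI notI)
    fix l :: real assume "0 \<le> l" "y = - (l *\<^sub>R a)"
    then have "ray_gauge a y = 0"
      by (simp add: ray_gauge_def abs_mult power2_norm_eq_inner[symmetric] power2_eq_square)
    with pos show False by simp
  qed
next
  assume off_ray: "\<forall>l\<ge>0. y \<noteq> - (l *\<^sub>R a)"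
  show "0 < ray_gauge a y"
  proof (rule ccontr)
    assume "\<not> 0 < ray_gauge a y"
    then have "inner a (- y) = norm a * norm (- y)"
      using ray_gauge_nonneg[of a y] by (simp add: ray_gauge_def)
    then have parallel: "norm a *\<^sub>R (- y) = norm y *\<^sub>R a"
      using norm_cauchy_schwarz_eq[of a "- y"] by simp
    have "y = - (inverse (norm a) *\<^sub>R (norm a *\<^sub>R (- y)))"
      using assms by simp
    also have "\<dots> = - ((norm y / norm a) *\<^sub>R a)"
      using parallel by (simp add: divide_inverse)
    finally have "y = - ((norm y / norm a) *\<^sub>R a)" .
    with off_ray show False by simp
  qed
qed

lemma ray_gauge_nonpos_multiple: "l \<le> 0 \<Longrightarrow> ray_gauge a (l *\<^sub>R a) = 0"
  by (simp add: ray_gauge_def abs_of_nonpos power2_norm_eq_inner[symmetric] power2_eq_square)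

lemma off_ray_iff_ray_gauge_pos:
  fixes \<omega> y :: "'a::real_inner"
  assumes "norm \<omega> = 1" "0 < c"
  shows "y \<in> - {y. \<exists>l\<ge>0. y = - (l *\<^sub>R \<omega>)} \<longleftrightarrow> 0 < ray_gauge (c *\<^sub>R \<omega>) y"
proof -
  have "\<omega> \<noteq> 0" using assms(1) by auto
  then show ?thesis
    using ray_gauge_pos_iff[of \<omega> y] assms(2) by (simp add: ray_gauge_scaleR zero_less_mult_iff)
qed

lemma has_derivative_ray_gauge:
  fixes a y :: "'a::real_inner"
  assumes "y \<noteq> 0"
  shows "(ray_gauge a has_derivative (\<lambda>h. norm a * inner y h / norm y + inner a h)) (at y)"
proof -
  have "(ray_gauge a has_derivative (\<lambda>h. norm a * inner h (sgn y) + inner a h)) (at y)"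
    unfolding ray_gauge_def[abs_def]
    by (intro has_derivative_add has_derivative_mult_right has_derivative_norm[OF assms]
        bounded_linear_imp_has_derivative bounded_linear_inner_right)
  then show ?thesis
    by (rule has_derivative_eq_rhs) (simp add: fun_eq_iff sgn_div_norm inner_commute divide_inverse mult_ac)
qed

lemma has_real_derivative_norm_line:
  fixes y e :: "'a::real_inner"
  assumes "y + s *\<^sub>R e \<noteq> 0"
  shows "((\<lambda>t. norm (y + t *\<^sub>R e)) has_real_derivative
           inner (y + s *\<^sub>R e) e / norm (y + s *\<^sub>R e)) (at s)"
proof -
  have "((\<lambda>t. y + t *\<^sub>R e) has_derivative (\<lambda>h. h *\<^sub>R e)) (at s)"
    by (auto intro!: derivative_eq_intros)
  from has_derivative_compose[OF this has_derivative_norm[OF assms]]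
  show ?thesis unfolding has_field_derivative_def
    by (rule has_derivative_eq_rhs) (simp add: fun_eq_iff sgn_div_norm inner_commute divide_inverse mult_ac)
qed

lemma ray_gauge_line_derivatives:
  fixes a y e :: "'a::real_inner"
  assumes "y \<noteq> 0"
  shows "\<forall>\<^sub>F s in nhds 0. ((\<lambda>t. ray_gauge a (y + t *\<^sub>R e)) has_real_derivative
           norm a * inner (y + s *\<^sub>R e) e / norm (y + s *\<^sub>R e) + inner a e) (at s)"
    and "((\<lambda>s. norm a * inner (y + s *\<^sub>R e) e / norm (y + s *\<^sub>R e) + inner a e) has_real_derivative
           norm a * (inner e e - (inner y e / norm y)\<^sup>2) / norm y) (at 0)"
proof -
  have "open {s. y + s *\<^sub>R e \<noteq> 0}"
    by (intro open_Collect_neq continuous_intros)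
  from eventually_nhds_in_open[OF this, of 0] assms
  have "\<forall>\<^sub>F s in nhds 0. y + s *\<^sub>R e \<noteq> 0" by simp
  then show "\<forall>\<^sub>F s in nhds 0. ((\<lambda>t. ray_gauge a (y + t *\<^sub>R e)) has_real_derivative
           norm a * inner (y + s *\<^sub>R e) e / norm (y + s *\<^sub>R e) + inner a e) (at s)"
    by eventually_elim
      (auto simp: ray_gauge_def inner_add_right intro!: derivative_eq_intros has_real_derivative_norm_line)
  show "((\<lambda>s. norm a * inner (y + s *\<^sub>R e) e / norm (y + s *\<^sub>R e) + inner a e) has_real_derivative
           norm a * (inner e e - (inner y e / norm y)\<^sup>2) / norm y) (at 0)"
    using assms
    by (auto intro!: derivative_eq_intros has_real_derivative_norm_line
        simp: inner_add_left power2_eq_square field_simps)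
qed

lemma has_laplacian_cmult:
  assumes "has_laplacian f y L"
  shows "has_laplacian (\<lambda>z. k * f z) y (k * L)"
proof -
  from assms obtain d where d: "\<forall>i\<in>Basis. \<exists>g::real \<Rightarrow> real.
            (\<forall>\<^sub>F s in nhds 0. ((\<lambda>t. f (y + t *\<^sub>R i)) has_real_derivative g s) (at s))
          \<and> (g has_real_derivative d i) (at 0)" and L: "L = (\<Sum>i\<in>Basis. d i)"
    unfolding has_laplacian_def by blast
  show ?thesis unfolding has_laplacian_def
  proof (intro exI[of _ "\<lambda>i. k * d i"] conjI ballI)
    fix i :: 'a assume "i \<in> Basis"
    with d obtain g where g1: "\<forall>\<^sub>F s in nhds 0. ((\<lambda>t. f (y + t *\<^sub>R i)) has_real_derivative g s) (at s)"
      and g2: "(g has_real_derivative d i) (at 0)" by blast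
    show "\<exists>g. (\<forall>\<^sub>F s in nhds 0. ((\<lambda>t. k * f (y + t *\<^sub>R i)) has_real_derivative g s) (at s))
          \<and> (g has_real_derivative k * d i) (at 0)"
      by (intro exI[of _ "\<lambda>s. k * g s"] conjI DERIV_cmult g2 eventually_mono[OF g1]) auto
  qed (simp add: L sum_distrib_left)
qed

lemma has_laplacian_translate:
  "has_laplacian f (x - v) L \<Longrightarrow> has_laplacian (\<lambda>z. f (z - v)) x L"
  unfolding has_laplacian_def by (simp add: diff_add_eq)

lemma has_laplacian_compose:
  fixes W :: "'a::euclidean_space \<Rightarrow> real"
  assumes W_line: "\<And>e. e \<in> Basis \<Longrightarrow>
      (\<forall>\<^sub>F s in nhds 0. ((\<lambda>t. W (y + t *\<^sub>R e)) has_real_derivative W1 e s) (at s))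
      \<and> (W1 e has_real_derivative W2 e) (at 0)"
    and g: "\<forall>\<^sub>F x in nhds (W y). (g has_real_derivative g1 x) (at x)"
    and g1: "(g1 has_real_derivative g2) (at (W y))"
  shows "has_laplacian (\<lambda>z. g (W z)) y
           (g2 * (\<Sum>e\<in>Basis. (W1 e 0)\<^sup>2) + g1 (W y) * (\<Sum>e\<in>Basis. W2 e))"
proof -
  have second_derivative:
    "\<exists>G. (\<forall>\<^sub>F s in nhds 0. ((\<lambda>t. g (W (y + t *\<^sub>R e))) has_real_derivative G s) (at s))
      \<and> (G has_real_derivative g2 * (W1 e 0)\<^sup>2 + g1 (W y) * W2 e) (at 0)"
    if e: "e \<in> Basis" for e
  proof (intro exI conjI)
    let ?w = "\<lambda>s. W (y + s *\<^sub>R e)"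
    from W_line[OF e] have w': "\<forall>\<^sub>F s in nhds 0. (?w has_real_derivative W1 e s) (at s)"
      and W1': "(W1 e has_real_derivative W2 e) (at 0)" by auto
    have w0: "(?w has_real_derivative W1 e 0) (at 0)"
      using eventually_nhds_x_imp_x[OF w'] .
    have "filterlim ?w (nhds (W y)) (at 0)"
      using DERIV_isCont[OF w0] by (simp add: isCont_def)
    then have "\<forall>\<^sub>F s in at 0. (g has_real_derivative g1 (?w s)) (at (?w s))"
      using g unfolding filterlim_iff by blast
    moreover have "(g has_real_derivative g1 (?w 0)) (at (?w 0))"
      using eventually_nhds_x_imp_x[OF g] by simp
    ultimately have "\<forall>\<^sub>F s in nhds 0. (g has_real_derivative g1 (?w s)) (at (?w s))"
      by (simp add: eventually_nhds_conv_at)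
    with w' show "\<forall>\<^sub>F s in nhds 0. ((\<lambda>t. g (?w t)) has_real_derivative g1 (?w s) * W1 e s) (at s)"
      by eventually_elim (rule DERIV_chain2)
    have "((\<lambda>s. g1 (?w s)) has_real_derivative g2 * W1 e 0) (at 0)"
      using DERIV_chain2[of g1 g2 ?w 0] g1 w0 by simp
    from DERIV_mult[OF this W1']
    show "((\<lambda>s. g1 (?w s) * W1 e s) has_real_derivative g2 * (W1 e 0)\<^sup>2 + g1 (W y) * W2 e) (at 0)"
      by (rule DERIV_cong) (simp add: power2_eq_square)
  qed
  show ?thesis
    unfolding has_laplacian_def
    using second_derivative
    by (intro exI[of _ "\<lambda>e. g2 * (W1 e 0)\<^sup>2 + g1 (W y) * W2 e"] conjI)
      (auto simp: sum.distrib sum_distrib_left)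
qed

lemma sum_Basis_inner_squares:
  fixes y :: "'a::euclidean_space"
  shows "(\<Sum>e\<in>Basis. (inner y e)\<^sup>2) = (norm y)\<^sup>2"
proof -
  have "(\<Sum>e\<in>Basis. (inner y e)\<^sup>2) = inner y y"
    by (simp add: euclidean_inner[of y y] power2_eq_square)
  then show ?thesis by (simp add: power2_norm_eq_inner)
qed

lemma has_laplacian_compose_ray_gauge:
  fixes a y :: "'a::euclidean_space"
  assumes y: "y \<noteq> 0"
    and g: "\<forall>\<^sub>F x in nhds (ray_gauge a y). (g has_real_derivative g1 x) (at x)"
    and g1: "(g1 has_real_derivative g2) (at (ray_gauge a y))"
  shows "has_laplacian (\<lambda>z. g (ray_gauge a z)) y
           (norm a / norm y * (2 * ray_gauge a y * g2 + (real DIM('a) - 1) * g1 (ray_gauge a y)))"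
proof -
  define W1 where "W1 e s = norm a * inner (y + s *\<^sub>R e) e / norm (y + s *\<^sub>R e) + inner a e" for e s
  define W2 where "W2 e = norm a * (1 - (inner y e / norm y)\<^sup>2) / norm y" for e
  have "(W1 e has_real_derivative W2 e) (at 0)" if "e \<in> Basis" for e
    using ray_gauge_line_derivatives(2)[OF y, of a e] that by (simp add: W1_def[abs_def] W2_def)
  then have lap: "has_laplacian (\<lambda>z. g (ray_gauge a z)) y
          (g2 * (\<Sum>e\<in>Basis. (W1 e 0)\<^sup>2) + g1 (ray_gauge a y) * (\<Sum>e\<in>Basis. W2 e))"
    using ray_gauge_line_derivatives(1)[OF y] g g1 unfolding W1_def
    by (intro has_laplacian_compose) auto
  have sum_W1: "(\<Sum>e\<in>Basis. (W1 e 0)\<^sup>2) = 2 * norm a * ray_gauge a y / norm y"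
  proof -
    have "(\<Sum>e\<in>Basis. (W1 e 0)\<^sup>2) = (norm a / norm y)\<^sup>2 * (\<Sum>e\<in>Basis. (inner y e)\<^sup>2)
        + 2 * (norm a / norm y) * (\<Sum>e\<in>Basis. inner y e * inner a e) + (\<Sum>e\<in>Basis. (inner a e)\<^sup>2)"
      by (simp add: W1_def power2_sum sum.distrib sum_distrib_left sum_divide_distrib
          power_divide power_mult_distrib mult_ac)
    also have "\<dots> = (norm a / norm y)\<^sup>2 * (norm y)\<^sup>2 + 2 * (norm a / norm y) * inner y a + (norm a)\<^sup>2"
      by (simp only: sum_Basis_inner_squares euclidean_inner[symmetric])
    also have "\<dots> = 2 * norm a * ray_gauge a y / norm y"
      using y by (simp add: ray_gauge_def inner_commute field_simps power2_eq_square)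
    finally show ?thesis .
  qed
  have sum_W2: "(\<Sum>e\<in>Basis. W2 e) = norm a * (real DIM('a) - 1) / norm y"
    using y by (simp add: W2_def sum_divide_distrib[symmetric] sum_distrib_left[symmetric]
        sum_subtractf sum_Basis_inner_squares power_divide)
  have "g2 * (2 * norm a * ray_gauge a y / norm y) + g1 (ray_gauge a y) * (norm a * (real DIM('a) - 1) / norm y)
      = norm a / norm y * (2 * ray_gauge a y * g2 + (real DIM('a) - 1) * g1 (ray_gauge a y))"
    by (simp add: divide_simps algebra_simps)
  with lap show ?thesis
    by (simp only: sum_W1 sum_W2)
qed

lemma has_laplacian_ray_gauge_powr:
  fixes a y :: "'a::euclidean_space"
  assumes W: "0 < ray_gauge a y"
  shows "has_laplacian (\<lambda>z. ray_gauge a z powr q) y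
           (q * (norm a / norm y) * ray_gauge a y powr (q - 1) * (real DIM('a) - 1 + 2 * (q - 1)))"
proof -
  let ?W = "ray_gauge a y"
  have y: "y \<noteq> 0"
    using W by (auto simp: ray_gauge_def)
  have "\<forall>\<^sub>F x in nhds ?W. 0 < x"
    using eventually_nhds_in_open[OF open_greaterThan, of ?W 0] W by simp
  then have "\<forall>\<^sub>F x in nhds ?W. ((\<lambda>x. x powr q) has_real_derivative q * x powr (q - 1)) (at x)"
    by eventually_elim (rule has_real_derivative_powr)
  moreover have "((\<lambda>x. q * x powr (q - 1)) has_real_derivative q * ((q - 1) * ?W powr (q - 2))) (at ?W)"
    using has_real_derivative_powr[OF W, of "q - 1"] by (auto intro: DERIV_cmult)
  ultimately have lap: "has_laplacian (\<lambda>z. ray_gauge a z powr q) y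
      (norm a / norm y * (2 * ?W * (q * ((q - 1) * ?W powr (q - 2)))
        + (real DIM('a) - 1) * (q * ?W powr (q - 1))))"
    by (rule has_laplacian_compose_ray_gauge[OF y])
  have "?W * ?W powr (q - 2) = ?W powr (q - 1)"
    using W by (simp add: powr_diff field_simps power2_eq_square)
  then have lap_value: "norm a / norm y * (2 * ?W * (q * ((q - 1) * ?W powr (q - 2)))
        + (real DIM('a) - 1) * (q * ?W powr (q - 1)))
      = q * (norm a / norm y) * ?W powr (q - 1) * (real DIM('a) - 1 + 2 * (q - 1))"
    using y by (simp add: field_simps)
  from lap show ?thesis unfolding lap_value .
qed

lemma mstar_less_imp:
  assumes "2 \<le> n" "mstar n < m"
  shows "0 < m" and "(real n - 3) / (real n - 1) < m"
proof -
  show "0 < m"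
  proof (cases "n = 2")
    case False
    then have "mstar n = (real n - 3) / (real n - 1)" by (simp add: mstar_def)
    moreover have "0 \<le> (real n - 3) / (real n - 1)" using assms(1) False by simp
    ultimately show ?thesis using assms(2) by linarith
  qed (use assms in \<open>simp add: mstar_def\<close>)
  then show "(real n - 3) / (real n - 1) < m"
    using assms by (cases "n = 2") (simp_all add: mstar_def)
qed

lemma Aconst_base_pos:
  assumes "2 \<le> n" "mstar n < m" "m < 1"
  shows "0 < (real n - 1) * m / (1 - m) * (m - (real n - 3) / (real n - 1))"
  using mstar_less_imp[OF assms(1,2)] assms by simp

lemma Aconst_pos: "2 \<le> n \<Longrightarrow> mstar n < m \<Longrightarrow> m < 1 \<Longrightarrow> 0 < Aconst n m"
  unfolding Aconst_def powr_gt_zero by (metis Aconst_base_pos less_irrefl)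

text \<open>This identity is what the choice of \<open>A\<close> is for: it turns \<open>\<Delta>\<phi>\<^sup>m\<close> into \<open>-a\<cdot>\<nabla>\<phi>\<close>.\<close>

lemma Aconst_balance:
  assumes "2 \<le> n" "mstar n < m" "m < 1"
  defines "q \<equiv> - m / (1 - m)"
  shows "Aconst n m powr m * (q * (real n - 1 + 2 * (q - 1))) = Aconst n m / (1 - m)"
proof -
  define B where "B = (real n - 1) * m / (1 - m) * (m - (real n - 3) / (real n - 1))"
  have B: "0 < B" using Aconst_base_pos[OF assms(1-3)] by (simp add: B_def)
  have A: "Aconst n m = B powr (1 / (1 - m))" by (simp add: Aconst_def B_def)
  have "q * (real n - 1 + 2 * (q - 1)) = B / (1 - m)"
    using assms(1,3) by (simp add: q_def B_def divide_simps) (simp add: algebra_simps)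
  moreover have "Aconst n m powr m * B = Aconst n m"
  proof -
    have "Aconst n m powr m * B = B powr (m / (1 - m) + 1)"
      using B by (simp add: A powr_powr powr_add)
    also have "m / (1 - m) + 1 = 1 / (1 - m)"
      using assms(3) by (simp add: field_simps)
    finally show ?thesis by (simp add: A)
  qed
  ultimately show ?thesis by simp
qed

lemma has_derivative_phi:
  fixes a y :: "'a::euclidean_space"
  assumes W: "0 < ray_gauge a y"
  shows "(phi n m a has_derivative (\<lambda>h. Aconst n m * (- 1 / (1 - m) * ray_gauge a y powr (- 1 / (1 - m) - 1)
            * (norm a * inner y h / norm y + inner a h)))) (at y)"
proof -
  have y: "y \<noteq> 0"
    using W by (auto simp: ray_gauge_def)
  from has_derivative_compose[OF has_derivative_ray_gauge[OF y]
      has_real_derivative_powr[OF W, of "- 1 / (1 - m)", unfolded has_field_derivative_def]]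
  have "((\<lambda>z. ray_gauge a z powr (- 1 / (1 - m))) has_derivative (\<lambda>h. - 1 / (1 - m)
      * ray_gauge a y powr (- 1 / (1 - m) - 1) * (norm a * inner y h / norm y + inner a h))) (at y)"
    by (simp add: o_def mult_ac)
  from has_derivative_mult_right[OF this, of "Aconst n m"]
  show ?thesis
    unfolding phi_eq_ray_gauge[abs_def] .
qed

lemma phi_transport_derivative:
  fixes a y :: "'a::euclidean_space"
  assumes W: "0 < ray_gauge a y" and "m < 1"
  shows "\<exists>D. (phi n m a has_derivative D) (at y)
           \<and> - D a = Aconst n m / (1 - m) * (norm a / norm y) * ray_gauge a y powr (- 1 / (1 - m))"
proof (intro exI conjI)
  let ?W = "ray_gauge a y" and ?p = "- 1 / (1 - m)"
  show "(phi n m a has_derivative (\<lambda>h. Aconst n m * (?p * ?W powr (?p - 1)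
            * (norm a * inner y h / norm y + inner a h)))) (at y)"
    by (rule has_derivative_phi[OF W])
  have y: "y \<noteq> 0"
    using W by (auto simp: ray_gauge_def)
  have "norm a * inner y a / norm y + inner a a = norm a / norm y * ?W"
    using y by (simp add: ray_gauge_def inner_commute power2_norm_eq_inner[symmetric] field_simps power2_eq_square)
  moreover have "?W powr (?p - 1) * ?W = ?W powr ?p"
    using W by (simp add: powr_diff)
  ultimately show "- (Aconst n m * (?p * ?W powr (?p - 1) * (norm a * inner y a / norm y + inner a a)))
      = Aconst n m / (1 - m) * (norm a / norm y) * ?W powr ?p"
    by (simp add: field_simps)
qed

lemma has_laplacian_phi_powr:
  fixes a y :: "'a::euclidean_space"
  assumes "2 \<le> DIM('a)" "mstar DIM('a) < m" "m < 1" and W: "0 < ray_gauge a y"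
  shows "has_laplacian (\<lambda>z. phi DIM('a) m a z powr m) y
           (Aconst DIM('a) m / (1 - m) * (norm a / norm y) * ray_gauge a y powr (- 1 / (1 - m)))"
proof -
  define A where "A = Aconst DIM('a) m"
  define q where "q = - m / (1 - m)"
  have A: "0 < A" using Aconst_pos[OF assms(1-3)] by (simp add: A_def)
  have phi_powr: "(\<lambda>z. phi DIM('a) m a z powr m) = (\<lambda>z. A powr m * ray_gauge a z powr q)"
    using A ray_gauge_nonneg[of a]
    by (simp add: fun_eq_iff phi_eq_ray_gauge A_def q_def powr_mult powr_powr)
  have lap: "has_laplacian (\<lambda>z. A powr m * ray_gauge a z powr q) y
      (A powr m * (q * (norm a / norm y) * ray_gauge a y powr (q - 1) * (real DIM('a) - 1 + 2 * (q - 1))))"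
    by (rule has_laplacian_cmult[OF has_laplacian_ray_gauge_powr[OF W]])
  have q_pred: "q - 1 = - 1 / (1 - m)"
    using assms(3) by (simp add: q_def field_simps)
  have balance: "A powr m * (q * (real DIM('a) - 1 + 2 * (q - 1))) = A / (1 - m)"
    unfolding A_def q_def by (rule Aconst_balance[OF assms(1-3)])
  have "A powr m * (q * (norm a / norm y) * ray_gauge a y powr (q - 1) * (real DIM('a) - 1 + 2 * (q - 1)))
      = A powr m * (q * (real DIM('a) - 1 + 2 * (q - 1))) * (norm a / norm y) * ray_gauge a y powr (q - 1)"
    by (simp only: mult_ac)
  also have "\<dots> = A / (1 - m) * (norm a / norm y) * ray_gauge a y powr (- 1 / (1 - m))"
    by (subst balance) (simp only: q_pred)
  finally have lap_value:
    "A powr m * (q * (norm a / norm y) * ray_gauge a y powr (q - 1) * (real DIM('a) - 1 + 2 * (q - 1)))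
      = A / (1 - m) * (norm a / norm y) * ray_gauge a y powr (- 1 / (1 - m))" .
  from lap have "has_laplacian (\<lambda>z. phi DIM('a) m a z powr m) y
      (A / (1 - m) * (norm a / norm y) * ray_gauge a y powr (- 1 / (1 - m)))"
    unfolding phi_powr lap_value .
  then show ?thesis by (simp only: A_def)
qed

lemma filterlim_phi_at_top:
  assumes "0 < Aconst n m" "m < 1"
    and "((\<lambda>x. ray_gauge a (g x)) \<longlongrightarrow> 0) F" "\<forall>\<^sub>F x in F. 0 < ray_gauge a (g x)"
  shows "filterlim (\<lambda>x. phi n m a (g x)) at_top F"
proof -
  have "filterlim (\<lambda>x. ray_gauge a (g x)) (at_right 0) F"
    using assms(3,4) by (auto simp: filterlim_at elim: eventually_mono)
  moreover have "filterlim (\<lambda>w::real. w powr (- 1 / (1 - m))) at_top (at_right 0)"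
    using assms(2) by real_asymp
  ultimately have "filterlim (\<lambda>x. ray_gauge a (g x) powr (- 1 / (1 - m))) at_top F"
    by (rule filterlim_compose[rotated])
  then show ?thesis
    unfolding phi_eq_ray_gauge by (rule filterlim_tendsto_pos_mult_at_top[OF tendsto_const assms(1)])
qed

lemma has_real_derivative_transport:
  assumes "(f has_derivative D) (at (x - t *\<^sub>R v))"
  shows "((\<lambda>s. f (x - s *\<^sub>R v)) has_real_derivative - D v) (at t)"
proof -
  have "((\<lambda>s. x - s *\<^sub>R v) has_derivative (\<lambda>h. - (h *\<^sub>R v))) (at t)"
    by (auto intro!: derivative_eq_intros)
  from has_derivative_compose[OF this assms]
  have "((\<lambda>s. f (x - s *\<^sub>R v)) has_derivative (\<lambda>h. D (- (h *\<^sub>R v)))) (at t)"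
    by (simp add: o_def)
  moreover have "linear D"
    using assms by (rule has_derivative_linear)
  ultimately show ?thesis
    unfolding has_field_derivative_def
    by (auto elim!: has_derivative_eq_rhs simp: fun_eq_iff linear_neg linear_cmul)
qed

lemma phi_stationary:
  fixes a y :: "'a::euclidean_space"
  assumes "2 \<le> DIM('a)" "mstar DIM('a) < m" "m < 1" and W: "0 < ray_gauge a y"
  defines "L \<equiv> Aconst DIM('a) m / (1 - m) * (norm a / norm y) * ray_gauge a y powr (- 1 / (1 - m))"
  shows "\<exists>D. (phi DIM('a) m a has_derivative D) (at y)
           \<and> has_laplacian (\<lambda>z. phi DIM('a) m a z powr m) y L \<and> L = - D a \<and> 0 \<le> L"
proof -
  obtain D where "(phi DIM('a) m a has_derivative D) (at y)" "L = - D a"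
    using phi_transport_derivative[OF W assms(3), of "DIM('a)"] unfolding L_def by auto
  moreover have "has_laplacian (\<lambda>z. phi DIM('a) m a z powr m) y L"
    using has_laplacian_phi_powr[OF assms(1-3) W] unfolding L_def .
  moreover have "0 \<le> L"
    using Aconst_pos[OF assms(1-3)] assms(3) unfolding L_def by simp
  ultimately show ?thesis by blast
qed

lemma phi_travelling_wave:
  fixes a x :: "'a::euclidean_space"
  assumes "2 \<le> DIM('a)" "mstar DIM('a) < m" "m < 1" and W: "0 < ray_gauge a (x - t *\<^sub>R a)"
  shows "\<exists>L. ((\<lambda>s. phi DIM('a) m a (x - s *\<^sub>R a)) has_real_derivative L) (at t)
           \<and> has_laplacian (\<lambda>z. phi DIM('a) m a (z - t *\<^sub>R a) powr m) x L \<and> 0 \<le> L"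
proof -
  from phi_stationary[OF assms] obtain D L where
    "(phi DIM('a) m a has_derivative D) (at (x - t *\<^sub>R a))"
    "has_laplacian (\<lambda>z. phi DIM('a) m a z powr m) (x - t *\<^sub>R a) L" "L = - D a" "0 \<le> L"
    by blast
  then show ?thesis
    using has_real_derivative_transport has_laplacian_translate by blast
qed

lemma phi_blowup_on_ray:
  fixes \<omega> :: "'a::euclidean_space"
  assumes "norm \<omega> = 1" "0 < c" "s \<le> c * t" "0 < Aconst n m" "m < 1"
  defines "a \<equiv> c *\<^sub>R \<omega>"
  shows "filterlim (\<lambda>x. phi n m a (x - t *\<^sub>R a)) at_top
           (at (s *\<^sub>R \<omega>) within {x. 0 < ray_gauge a (x - t *\<^sub>R a)})"
proof (rule filterlim_phi_at_top[OF assms(4,5)])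
  have "ray_gauge a (s *\<^sub>R \<omega> - t *\<^sub>R a) = c * ray_gauge \<omega> ((s - c * t) *\<^sub>R \<omega>)"
    using assms(2) by (simp add: a_def ray_gauge_scaleR algebra_simps)
  also have "\<dots> = 0"
    using assms(3) by (simp add: ray_gauge_nonpos_multiple)
  finally have singular: "ray_gauge a (s *\<^sub>R \<omega> - t *\<^sub>R a) = 0" .
  show "((\<lambda>x. ray_gauge a (x - t *\<^sub>R a)) \<longlongrightarrow> 0)
      (at (s *\<^sub>R \<omega>) within {x. 0 < ray_gauge a (x - t *\<^sub>R a)})"
    unfolding singular[symmetric] ray_gauge_def by (intro tendsto_intros)
qed (auto simp: eventually_at_filter)

lemma pm_supersolution_at_scale:
  assumes ut: "((\<lambda>s. u x s) has_real_derivative L) (at t)"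
    and lap: "has_laplacian (\<lambda>z. u z t powr m) x L"
    and "0 \<le> L" "\<And>z. 0 \<le> u z t" "1 \<le> k" "m \<le> 1"
  shows "pm_supersolution_at (\<lambda>x t. k * u x t) m x t"
proof -
  have "has_laplacian (\<lambda>z. (k * u z t) powr m) x (k powr m * L)"
    using has_laplacian_cmult[OF lap, of "k powr m"] assms(4,5) by (simp add: powr_mult)
  moreover have "k powr m * L \<le> k * L"
    using powr_mono[of m 1 k] assms(3,5,6) by (simp add: mult_right_mono)
  ultimately show ?thesis
    unfolding pm_supersolution_at_def using DERIV_cmult[OF ut, of k] by blast
qed

lemma pm_subsolution_at_scale:
  assumes ut: "((\<lambda>s. u x s) has_real_derivative L) (at t)"
    and lap: "has_laplacian (\<lambda>z. u z t powr m) x L"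
    and "0 \<le> L" "\<And>z. 0 \<le> u z t" "0 \<le> k" "k \<le> 1" "m \<le> 1"
  shows "pm_subsolution_at (\<lambda>x t. k * u x t) m x t"
proof -
  have "has_laplacian (\<lambda>z. (k * u z t) powr m) x (k powr m * L)"
    using has_laplacian_cmult[OF lap, of "k powr m"] assms(4,5) by (simp add: powr_mult)
  moreover have "k * L \<le> k powr m * L"
    using powr_mono'[of m 1 k] assms(3,5-7) by (simp add: mult_right_mono)
  ultimately show ?thesis
    unfolding pm_subsolution_at_def using DERIV_cmult[OF ut, of k] by blast
qed

theorem mainTheorem2:
  fixes \<omega> :: "'a::euclidean_space" and m c :: real
  assumes n2: "DIM('a) \<ge> 2"
    and mlow: "mstar DIM('a) < m" and mup: "m < 1"
    and cpos: "c > 0"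
    and unit: "norm \<omega> = 1"
  defines "a \<equiv> c *\<^sub>R \<omega>"
  defines "\<Omega> \<equiv> - {y. \<exists>l\<ge>0. y = - (l *\<^sub>R \<omega>)}"
  defines "\<phi> \<equiv> phi DIM('a) m a"
  defines "A \<equiv> Aconst DIM('a) m"
  shows
    "(\<forall>y\<in>\<Omega>. \<exists>D L. (\<phi> has_derivative D) (at y)
        \<and> has_laplacian (\<lambda>z. (\<phi> z) powr m) y L
        \<and> L = - D a
        \<and> L = A / (1 - m) * (norm a / norm y) * (norm a * norm y + inner a y) powr (- 1 / (1 - m))
        \<and> L \<ge> 0)
   \<and> (\<forall>x t. x - t *\<^sub>R a \<in> \<Omega> \<longrightarrow> pm_solution_at (\<lambda>x t. \<phi> (x - t *\<^sub>R a)) m x t)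
   \<and> (\<forall>t x0. x0 \<in> {s *\<^sub>R \<omega> | s. s \<le> c * t} \<longrightarrow>
        filterlim (\<lambda>x. \<phi> (x - t *\<^sub>R a)) at_top (at x0 within {x. x - t *\<^sub>R a \<in> \<Omega>}))
   \<and> (\<forall>\<gamma>. 0 < \<gamma> \<and> \<gamma> < 1 \<longrightarrow>
        (\<forall>x t. x - t *\<^sub>R a \<in> \<Omega> \<longrightarrow>
            pm_supersolution_at (\<lambda>x t. (1 + \<gamma>) * \<phi> (x - t *\<^sub>R a)) m x t
          \<and> pm_subsolution_at (\<lambda>x t. (1 - \<gamma>) * \<phi> (x - t *\<^sub>R a)) m x t))"
proof -
  have A_pos: "0 < A"
    using Aconst_pos[OF n2 mlow mup] by (simp add: A_def)
  have Omega_iff: "y \<in> \<Omega> \<longleftrightarrow> 0 < ray_gauge a y" for y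
    unfolding \<Omega>_def a_def by (rule off_ray_iff_ray_gauge_pos[OF unit cpos])
  show ?thesis
  proof (intro conjI allI impI ballI)
    fix y assume "y \<in> \<Omega>"
    then show "\<exists>D L. (\<phi> has_derivative D) (at y) \<and> has_laplacian (\<lambda>z. (\<phi> z) powr m) y L
        \<and> L = - D a \<and> L = A / (1 - m) * (norm a / norm y) * (norm a * norm y + inner a y) powr (- 1 / (1 - m))
        \<and> L \<ge> 0"
      using phi_stationary[OF n2 mlow mup, of a y] by (auto simp: Omega_iff \<phi>_def A_def ray_gauge_def)
  next
    fix x t assume "x - t *\<^sub>R a \<in> \<Omega>"
    then show "pm_solution_at (\<lambda>x t. \<phi> (x - t *\<^sub>R a)) m x t"
      using phi_travelling_wave[OF n2 mlow mup, of a x t] unfolding pm_solution_at_def Omega_iff \<phi>_def by blast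
  next
    fix t x0 assume "x0 \<in> {s *\<^sub>R \<omega> | s. s \<le> c * t}"
    then show "filterlim (\<lambda>x. \<phi> (x - t *\<^sub>R a)) at_top (at x0 within {x. x - t *\<^sub>R a \<in> \<Omega>})"
      using phi_blowup_on_ray[OF unit cpos _ A_pos[unfolded A_def] mup] by (auto simp: Omega_iff \<phi>_def a_def)
  next
    fix \<gamma> :: real and x t assume "0 < \<gamma> \<and> \<gamma> < 1" and "x - t *\<^sub>R a \<in> \<Omega>"
    moreover have "0 \<le> \<phi> y" for y
      using A_pos by (simp add: \<phi>_def A_def phi_eq_ray_gauge)
    ultimately show "pm_supersolution_at (\<lambda>x t. (1 + \<gamma>) * \<phi> (x - t *\<^sub>R a)) m x t"
      and "pm_subsolution_at (\<lambda>x t. (1 - \<gamma>) * \<phi> (x - t *\<^sub>R a)) m x t"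
      using phi_travelling_wave[OF n2 mlow mup, of a x t] mup
      by (auto simp: Omega_iff \<phi>_def intro!: pm_supersolution_at_scale pm_subsolution_at_scale)
  qed
qed

end
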